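(* Let $n_1,n_2$ be coprime positive integers with $n_2<n_1$ and $n_1>1$. Let $r_0$ be a nonnegative rational number. Let $[a_0,a_1,\dots,a_L]$ be the continued fraction expansion of $n_2/n_1$ and $[b_0,b_1,\dots,b_M]$ the continued fraction expansion of $r_0$ (standard algorithm described in the context). If $$\left|r_0-\frac{n_2}{n_1}\right|<\frac{1}{4n_1(n_1-1)},$$ then one of the following holds: (1) $a_i=b_i$ for $i=0,1,\dots,L$; (2) $a_i=b_i$ for $i=0,1,\dots,L-1$, $a_L-1=b_L$, and $b_{L+1}=1$.
   Context: Continued fraction expansion of a nonnegative rational number $y$ (standard algorithm): set $c_0=\lfloor y\rfloor$ and $s_0=y-c_0$; for $i\ge1$, as long as $s_{i-1}\neq0$, set $c_i=\lfloor 1/s_{i-1}\rfloor$ and $s_i=1/s_{i-1}-c_i$. The process stops at the first index $M$ with $s_M=0$, and the expansion is $[c_0,c_1,\dots,c_M]$, meaning $y=c_0+\cfrac{1}{c_1+\cfrac{1}{\ddots+\cfrac{1}{c_M}}}$. *)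

theory Defs
  imports Complex_Main
begin

fun cf_rem :: "rat \<Rightarrow> nat \<Rightarrow> rat" where
  "cf_rem y 0 = y - of_int \<lfloor>y\<rfloor>"
| "cf_rem y (Suc i) = 1 / cf_rem y i - of_int \<lfloor>1 / cf_rem y i\<rfloor>"

fun cf_coeff :: "rat \<Rightarrow> nat \<Rightarrow> int" where
  "cf_coeff y 0 = \<lfloor>y\<rfloor>"
| "cf_coeff y (Suc i) = \<lfloor>1 / cf_rem y i\<rfloor>"

definition cf_len :: "rat \<Rightarrow> nat" where
  "cf_len y = (LEAST M. cf_rem y M = 0)"

definition cf_expansion :: "rat \<Rightarrow> int list" where
  "cf_expansion y = map (cf_coeff y) [0..<Suc (cf_len y)]"

end

theory Submission
  imports Defs "HOL-Library.Sublist"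
begin

(* Write R q = 1 / (q * (2 * q - 1)), which is at least the bound 1 / (4 * n1 * (n1 - 1)).
   If x = p / q is not an integer and |r - x| < R q, then r and x have the same integer part,
   frac x = d / q with 0 < d < q, and |1 / frac r - q / d| < R d: the closeness condition is
   inherited by the complete quotients, with a smaller denominator. Following the expansion of x
   to its last step, 1 / frac x = a >= 2 is an integer and 1 / frac r lies in (a - 1/2, a + 1),
   so the expansion of r continues either with a or with a - 1, 1. *)

lemma cf_rem_frac [simp]:
  "cf_rem y 0 = frac y"
  "cf_rem y (Suc i) = frac (1 / cf_rem y i)"
  by (simp_all add: frac_def)

declare cf_rem.simps [simp del]

lemma cf_rem_Suc_shift: "cf_rem y (Suc i) = cf_rem (1 / frac y) i"
  by (induction i) simp_all

lemma cf_coeff_Suc_shift: "cf_coeff y (Suc i) = cf_coeff (1 / frac y) i"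
  by (cases i) (simp_all only: cf_coeff.simps cf_rem_Suc_shift cf_rem_frac(1))

lemma frac_of_int_divide:
  fixes p q :: int
  assumes "0 < q"
  shows "frac (of_int p / of_int q :: 'a::floor_ceiling) = of_int (p mod q) / of_int q"
proof -
  have "(of_int p / of_int q :: 'a) = of_int (p div q) + of_int (p mod q) / of_int q"
    using assms by (simp add: field_simps flip: of_int_mult of_int_add)
  moreover have "0 \<le> (of_int (p mod q) / of_int q :: 'a)" "(of_int (p mod q) / of_int q :: 'a) < 1"
    using assms by simp_all
  ultimately show ?thesis
    by simp
qed

lemma cf_rem_eventually_0: "\<exists>M. cf_rem y M = 0"
proof -
  have "\<exists>M. cf_rem (of_int p / of_int q) M = 0" if "0 < q" for p q :: int
    using that
  proof (induction "nat q" arbitrary: p q rule: less_induct)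
    case less
    show ?case
    proof (cases "p mod q = 0")
      case True
      then have "cf_rem (of_int p / of_int q) 0 = 0"
        using less.prems by (simp add: frac_of_int_divide)
      then show ?thesis ..
    next
      case False
      then have "0 < p mod q" "p mod q < q"
        using less.prems by (simp_all add: order_le_neq_trans)
      then obtain M where "cf_rem (of_int q / of_int (p mod q)) M = 0"
        using less.hyps by fastforce
      then have "cf_rem (of_int p / of_int q) (Suc M) = 0"
        using less.prems by (simp only: cf_rem_Suc_shift frac_of_int_divide) simp
      then show ?thesis ..
    qed
  qed
  moreover obtain p q where "quotient_of y = (p, q)"
    by (cases "quotient_of y")
  then have "y = of_int p / of_int q" "0 < q"
    by (simp_all add: quotient_of_div quotient_of_denom_pos)
  ultimately show ?thesis
    by blast
qed

lemma cf_len_eq_0_iff: "cf_len y = 0 \<longleftrightarrow> y \<in> \<int>"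
  using LeastI_ex[OF cf_rem_eventually_0[of y]]
  by (auto simp: cf_len_def)

lemma cf_len_Suc:
  assumes "y \<notin> \<int>"
  shows "cf_len y = Suc (cf_len (1 / frac y))"
proof -
  obtain M where "cf_rem y M = 0"
    using cf_rem_eventually_0 by blast
  then have "(LEAST M. cf_rem y M = 0) = Suc (LEAST m. cf_rem y (Suc m) = 0)"
    using assms by (intro Least_Suc) auto
  then show ?thesis
    unfolding cf_len_def cf_rem_Suc_shift .
qed

lemma reciprocal_close_to_fraction:
  fixes d q u :: "'a::linordered_field"
  assumes "1 \<le> d" "d + 1 \<le> q" "\<bar>u - d / q\<bar> < 1 / (q * (2 * q - 1))"
  shows "\<bar>1 / u - q / d\<bar> < 1 / (d * (2 * d - 1))"
proof -
  define m where "m = d * (2 * q - 1) - 1"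
  define v where "v = m / (q * (2 * q - 1))"
  have q: "0 < q" "0 < 2 * q - 1" and d: "0 < d" "0 < 2 * d - 1"
    using assms by simp_all
  have "2 * q - 1 \<le> d * (2 * q - 1)"
    using assms(1) q by simp
  then have "0 < m"
    using assms unfolding m_def by linarith
  then have "0 < v"
    using q unfolding v_def by simp
  have "d / q - 1 / (q * (2 * q - 1)) = v"
    using q unfolding v_def m_def by (simp add: field_simps)
  then have "v < u"
    using assms(3) by linarith
  have "\<bar>1 / u - q / d\<bar> = \<bar>u - d / q\<bar> * (q / (d * u))"
    using \<open>0 < v\<close> \<open>v < u\<close> d q by (simp add: field_simps abs_minus_commute)
  also have "\<dots> < 1 / (q * (2 * q - 1)) * (q / (d * v))"
    using assms(3) \<open>0 < v\<close> \<open>v < u\<close> d q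
    by (intro mult_less_le_imp_less divide_left_mono) simp_all
  also have "\<dots> = q / (d * m)"
    using q d \<open>0 < m\<close> unfolding v_def by (simp add: field_simps)
  also have "\<dots> \<le> 1 / (d * (2 * d - 1))"
  proof -
    have "q * (2 * d - 1) \<le> m"
      using assms(2) unfolding m_def by (simp add: algebra_simps)
    then have "q * (d * (2 * d - 1)) \<le> d * m"
      using d by (simp add: mult.left_commute)
    then show ?thesis
      using d \<open>0 < m\<close> by (simp add: divide_simps)
  qed
  finally show ?thesis .
qed

lemma reciprocal_close_to_unit_fraction:
  fixes a q u :: "'a::linordered_field"
  assumes "2 \<le> a" "a \<le> q" "\<bar>u - 1 / a\<bar> < 1 / (q * (2 * q - 1))"
  shows "a - 1 / 2 < 1 / u" "1 / u < a + 1"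
proof -
  have "a * (2 * a - 1) \<le> q * (2 * q - 1)"
    using assms by (intro mult_mono) auto
  then have "1 / (q * (2 * q - 1)) \<le> 1 / (a * (2 * a - 1))"
    using assms by (intro divide_left_mono) auto
  then have u: "\<bar>u - 1 / a\<bar> < 1 / (a * (2 * a - 1))"
    using assms(3) by linarith
  have "1 / a + 1 / (a * (2 * a - 1)) = 1 / (a - 1 / 2)"
    using assms by (simp add: field_simps)
  then have upper: "u < 1 / (a - 1 / 2)"
    using u by linarith
  have "a * (2 * a - 1) \<le> 2 * (a - 1) * (a + 1)"
    using assms by (simp add: algebra_simps)
  then have "1 / (a + 1) \<le> 2 * (a - 1) / (a * (2 * a - 1))"
    using assms by (simp add: divide_simps)
  also have "\<dots> = 1 / a - 1 / (a * (2 * a - 1))"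
    using assms by (simp add: field_simps)
  finally have lower: "1 / (a + 1) < u"
    using u by linarith
  have "0 < 1 / (a + 1)"
    using assms by simp
  then have "0 < u"
    using lower by linarith
  show "a - 1 / 2 < 1 / u"
    using upper \<open>0 < u\<close> assms by (simp add: field_simps)
  show "1 / u < a + 1"
    using lower \<open>0 < u\<close> assms by (simp add: field_simps)
qed

lemma prefix_iff_nth: "prefix xs ys \<longleftrightarrow> length xs \<le> length ys \<and> (\<forall>i<length xs. xs ! i = ys ! i)"
proof (induction xs arbitrary: ys)
  case (Cons x xs)
  then show ?case
    by (cases ys) (auto simp: All_less_Suc2)
qed simp

lemma cf_expansion_not_Nil [simp]: "cf_expansion y \<noteq> []"
  by (simp add: cf_expansion_def)

lemma cf_expansion_int: "y \<in> \<int> \<Longrightarrow> cf_expansion y = [\<lfloor>y\<rfloor>]"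
  by (simp add: cf_expansion_def flip: cf_len_eq_0_iff)

lemma cf_expansion_not_int:
  assumes "y \<notin> \<int>"
  shows "cf_expansion y = \<lfloor>y\<rfloor> # cf_expansion (1 / frac y)"
  unfolding cf_expansion_def cf_len_Suc[OF assms]
  by (simp only: upt_conv_Cons zero_less_Suc map_Suc_upt[symmetric] list.map map_map
      o_def cf_coeff_Suc_shift cf_coeff.simps(1))

lemma prefix_floor_cf_expansion: "prefix [\<lfloor>y\<rfloor>] (cf_expansion y)"
  by (cases "y \<in> \<int>") (simp_all add: cf_expansion_int cf_expansion_not_int)

(* [a_0, ..., a_L - 1, 1] is the other continued fraction expansion of [a_0, ..., a_L]. *)
definition cf_prefix :: "rat \<Rightarrow> rat \<Rightarrow> bool" where
  "cf_prefix x r \<longleftrightarrow>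
     (let as = cf_expansion x in
      prefix as (cf_expansion r) \<or> prefix (butlast as @ [last as - 1, 1]) (cf_expansion r))"

lemma cf_prefix_Cons:
  assumes "x \<notin> \<int>" "r \<notin> \<int>" "\<lfloor>x\<rfloor> = \<lfloor>r\<rfloor>" "cf_prefix (1 / frac x) (1 / frac r)"
  shows "cf_prefix x r"
  using assms by (simp add: cf_prefix_def cf_expansion_not_int Let_def)

lemma cf_prefix_of_int:
  assumes "of_int a - 1 / 2 < r" "r < of_int a + 1"
  shows "cf_prefix (of_int a) r"
proof (cases "of_int a \<le> r")
  case True
  then have "\<lfloor>r\<rfloor> = a"
    using assms by (simp add: floor_eq_iff)
  then show ?thesis
    using prefix_floor_cf_expansion[of r] by (simp add: cf_prefix_def cf_expansion_int)
next
  case False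
  then have "\<lfloor>r\<rfloor> = a - 1"
    using assms by (simp add: floor_eq_iff)
  then have "frac r = r - of_int (a - 1)"
    by (simp add: frac_def)
  then have frac: "1 / 2 < frac r" "frac r < 1"
    using assms False by auto
  then have "0 < frac r"
    by linarith
  then have "r \<notin> \<int>"
    by simp
  have "\<lfloor>1 / frac r\<rfloor> = 1"
    using frac \<open>r \<notin> \<int>\<close> by (simp add: floor_eq_iff divide_simps)
  then have "prefix [a - 1, 1] (cf_expansion r)"
    using \<open>r \<notin> \<int>\<close> \<open>\<lfloor>r\<rfloor> = a - 1\<close> prefix_floor_cf_expansion[of "1 / frac r"]
    by (simp add: cf_expansion_not_int)
  then show ?thesis
    by (simp add: cf_prefix_def cf_expansion_int)
qed

lemma floor_frac_of_close_fraction: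
  fixes p q :: int and x r :: rat
  assumes "x \<notin> \<int>" "0 < q" "x = of_int p / of_int q"
    and "\<bar>r - x\<bar> < 1 / (of_int q * (2 * of_int q - 1))"
  shows "0 < p mod q" "p mod q < q" "1 / frac x = of_int q / of_int (p mod q)"
    and "r \<notin> \<int>" "\<lfloor>r\<rfloor> = \<lfloor>x\<rfloor>"
    and "\<bar>frac r - of_int (p mod q) / of_int q\<bar> < 1 / (of_int q * (2 * of_int q - 1))"
proof -
  define d where "d = p mod q"
  have frac_x: "frac x = of_int d / of_int q"
    using assms(2,3) unfolding d_def by (simp add: frac_of_int_divide)
  then have "d \<noteq> 0"
    using assms(1) by auto
  then show "0 < d" "d < q"
    using assms(2) unfolding d_def by (simp_all add: order_le_neq_trans)
  then show "1 / frac x = of_int q / of_int d"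
    using frac_x by simp
  have "1 / (of_int q * (2 * of_int q - 1)) < (1 / of_int q :: rat)"
    using \<open>0 < d\<close> \<open>d < q\<close> by (simp add: divide_simps)
  moreover have "1 / of_int q \<le> frac x" "frac x \<le> 1 - 1 / of_int q"
    using \<open>0 < d\<close> \<open>d < q\<close> frac_x by (simp_all add: divide_simps)
  ultimately have "of_int \<lfloor>x\<rfloor> < r" "r < of_int \<lfloor>x\<rfloor> + 1"
    using assms(4) unfolding frac_def by linarith+
  then show "\<lfloor>r\<rfloor> = \<lfloor>x\<rfloor>"
    by (simp add: floor_eq_iff)
  then have "frac r - frac x = r - x"
    by (simp add: frac_def)
  then show "\<bar>frac r - of_int d / of_int q\<bar> < 1 / (of_int q * (2 * of_int q - 1))"
    using assms(4) frac_x by simp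
  show "r \<notin> \<int>"
    using \<open>of_int \<lfloor>x\<rfloor> < r\<close> \<open>r < of_int \<lfloor>x\<rfloor> + 1\<close> \<open>\<lfloor>r\<rfloor> = \<lfloor>x\<rfloor>\<close>
    by (metis floor_of_int Ints_cases less_irrefl)
qed

lemma cf_prefix_if_close:
  fixes p q :: int and x r :: rat
  assumes "x \<notin> \<int>" "0 < q" "x = of_int p / of_int q"
    and "\<bar>r - x\<bar> < 1 / (of_int q * (2 * of_int q - 1))"
  shows "cf_prefix x r"
  using assms
proof (induction "cf_len x" arbitrary: x r p q rule: less_induct)
  case less
  define d where "d = p mod q"
  note step = floor_frac_of_close_fraction[OF less.prems, folded d_def]
  have "cf_prefix (1 / frac x) (1 / frac r)"
  proof (cases "1 / frac x \<in> \<int>")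
    case True
    then obtain a where a: "of_int q / of_int d = (of_int a :: rat)"
      using step(3) by (metis Ints_cases)
    then have "q = a * d"
      using step(1) by (simp add: divide_eq_eq flip: of_int_mult)
    then have "2 \<le> a" "a \<le> q"
      using step(1,2) by (auto simp: pos_zmult_eq_1_iff_lemma)
    moreover have "of_int d / of_int q = (1 / of_int a :: rat)"
      using \<open>q = a * d\<close> step(1) by simp
    then have "\<bar>frac r - 1 / of_int a\<bar> < 1 / (of_int q * (2 * of_int q - 1))"
      using step(6) by simp
    ultimately show ?thesis
      using step(3) a reciprocal_close_to_unit_fraction[of "of_int a" "of_int q" "frac r"]
      by (simp add: cf_prefix_of_int)
  next
    case False
    have "cf_len (1 / frac x) < cf_len x"
      using cf_len_Suc[OF less.prems(1)] by simp
    moreover have "\<bar>1 / frac r - of_int q / of_int d\<bar> < 1 / (of_int d * (2 * of_int d - 1))"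
      using step(1,2,6) by (intro reciprocal_close_to_fraction) simp_all
    ultimately show ?thesis
      using less.hyps False step(1,3) by auto
  qed
  then show ?case
    using cf_prefix_Cons less.prems(1) step(4,5) by metis
qed

theorem theorem5:
  fixes n1 n2 :: int and r0 :: rat
  assumes "n1 > 1" "n2 > 0" "n2 < n1" "coprime n1 n2"
    and "r0 \<ge> 0"
    and "\<bar>r0 - of_int n2 / of_int n1\<bar> < 1 / (4 * of_int n1 * (of_int n1 - 1))"
  shows "let as = cf_expansion (of_int n2 / of_int n1); bs = cf_expansion r0;
             L = length as - 1 in
         (L < length bs \<and> (\<forall>i\<le>L. as ! i = bs ! i))
       \<or> (L + 1 < length bs \<and> (\<forall>i<L. as ! i = bs ! i)
            \<and> as ! L - 1 = bs ! L \<and> bs ! (L + 1) = 1)"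
proof -
  define x where "x = (of_int n2 / of_int n1 :: rat)"
  define N where "N = (of_int n1 :: rat)"
  have "0 < x" "x < 1"
    using assms(1-3) unfolding x_def by simp_all
  then have "x \<notin> \<int>"
    by (metis frac_eq frac_eq_0_iff less_irrefl less_imp_le)
  have "N * (2 * N - 1) \<le> 4 * N * (N - 1)"
    using assms(1) unfolding N_def by (simp add: algebra_simps)
  then have "1 / (4 * N * (N - 1)) \<le> 1 / (N * (2 * N - 1))"
    using assms(1) unfolding N_def by (intro divide_left_mono) auto
  then have "cf_prefix x r0"
    using assms(1,6) \<open>x \<notin> \<int>\<close> cf_prefix_if_close[of x n1 n2 r0]
    unfolding x_def N_def by simp
  moreover obtain as' a where "cf_expansion x = as' @ [a]"
    using cf_expansion_not_Nil rev_exhaust by metis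
  ultimately show ?thesis
    unfolding cf_prefix_def Let_def prefix_iff_nth x_def[symmetric]
    by (auto simp: nth_append less_Suc_eq le_less)
qed

end
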